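(* Let $G$ be a group and $K$ a subgroup of $G$. The set $\mathrm{GCA}_K(A^G):=\{\mathcal{T}\in\mathrm{GCA}(A^G):\text{the minimal memory set of }\mathcal{T}\text{ is contained in }K\}$ is a submonoid of $\mathrm{GCA}(A^G)$ (under composition) if and only if $K$ is fully invariant, i.e. $\phi(K)\subseteq K$ for all $\phi\in\mathrm{End}(G)$.
   Context: $A$ is a finite set with $|A|\ge 2$. $A^G$ is the set of functions $G\to A$ with shift action $(g\cdot x)(k):=x(g^{-1}k)$. For $\phi\in\mathrm{End}(G)$, a $\phi$-cellular automaton is a map $\mathcal{T}:A^G\to A^G$ for which there exist a finite $T\subseteq G$ (memory set) and $\mu:A^T\to A$ with $\mathcal{T}(x)(h)=\mu((\phi(h^{-1})\cdot x)|_T)$ for all $x,h$. $\mathrm{GCA}(A^G)$ is the set of all $\phi$-cellular automata $A^G\to A^G$ over all $\phi\in\mathrm{End}(G)$; it is a monoid under composition (a composite of a $\phi$-CA with memory set $T$ after a $\psi$-CA with memory set $S$ is a $(\psi\circ\phi)$-CA with memory set $\psi(T)S$). The minimal memory set of $\mathcal{T}$ is the intersection of all its memory sets, which is itself a memory set. *)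

theory Defs
  imports Main
begin

text \<open>The group G is modelled as a type of class group_add (written additively,
  not necessarily commutative); A is a finite type with at least two elements.
  Configurations A^G are functions 'g => 'a.\<close>

definition group_endo :: "('g::group_add \<Rightarrow> 'g) \<Rightarrow> bool" where
  "group_endo \<phi> \<longleftrightarrow> (\<forall>a b. \<phi> (a + b) = \<phi> a + \<phi> b)"

definition is_subgroup :: "'g::group_add set \<Rightarrow> bool" where
  "is_subgroup K \<longleftrightarrow> 0 \<in> K \<and> (\<forall>a\<in>K. \<forall>b\<in>K. a + b \<in> K) \<and> (\<forall>a\<in>K. - a \<in> K)"

definition fully_invariant :: "'g::group_add set \<Rightarrow> bool" where
  "fully_invariant K \<longleftrightarrow> (\<forall>\<phi>. group_endo \<phi> \<longrightarrow> \<phi> ` K \<subseteq> K)"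

definition shift :: "'g::group_add \<Rightarrow> ('g \<Rightarrow> 'a) \<Rightarrow> ('g \<Rightarrow> 'a)" where
  "shift g x = (\<lambda>k. x (- g + k))"

definition restr :: "('g \<Rightarrow> 'a) \<Rightarrow> 'g set \<Rightarrow> ('g \<Rightarrow> 'a)" where
  "restr x T = (\<lambda>k. if k \<in> T then x k else undefined)"

definition phi_memory_set ::
  "('g::group_add \<Rightarrow> 'g) \<Rightarrow> 'g set \<Rightarrow> (('g \<Rightarrow> 'a) \<Rightarrow> ('g \<Rightarrow> 'a)) \<Rightarrow> bool" where
  "phi_memory_set \<phi> T \<tau> \<longleftrightarrow> finite T \<and>
     (\<exists>\<mu> :: ('g \<Rightarrow> 'a) \<Rightarrow> 'a. \<forall>x h. \<tau> x h = \<mu> (restr (shift (\<phi> (- h)) x) T))"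

definition is_phi_CA :: "('g::group_add \<Rightarrow> 'g) \<Rightarrow> (('g \<Rightarrow> 'a) \<Rightarrow> ('g \<Rightarrow> 'a)) \<Rightarrow> bool" where
  "is_phi_CA \<phi> \<tau> \<longleftrightarrow> (\<exists>T. phi_memory_set \<phi> T \<tau>)"

definition GCA :: "(('g::group_add \<Rightarrow> 'a) \<Rightarrow> ('g \<Rightarrow> 'a)) set" where
  "GCA = {\<tau>. \<exists>\<phi>. group_endo \<phi> \<and> is_phi_CA \<phi> \<tau>}"

definition memory_set :: "'g::group_add set \<Rightarrow> (('g \<Rightarrow> 'a) \<Rightarrow> ('g \<Rightarrow> 'a)) \<Rightarrow> bool" where
  "memory_set T \<tau> \<longleftrightarrow> (\<exists>\<phi>. group_endo \<phi> \<and> phi_memory_set \<phi> T \<tau>)"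

definition minimal_memory_set :: "(('g::group_add \<Rightarrow> 'a) \<Rightarrow> ('g \<Rightarrow> 'a)) \<Rightarrow> 'g set" where
  "minimal_memory_set \<tau> = \<Inter> {T. memory_set T \<tau>}"

definition GCA_K :: "'g::group_add set \<Rightarrow> (('g \<Rightarrow> 'a) \<Rightarrow> ('g \<Rightarrow> 'a)) set" where
  "GCA_K K = {\<tau> \<in> GCA. minimal_memory_set \<tau> \<subseteq> K}"

definition is_submonoid_GCA :: "(('g::group_add \<Rightarrow> 'a) \<Rightarrow> ('g \<Rightarrow> 'a)) set \<Rightarrow> bool" where
  "is_submonoid_GCA S \<longleftrightarrow> S \<subseteq> GCA \<and> id \<in> S \<and> (\<forall>\<sigma>\<in>S. \<forall>\<tau>\<in>S. \<sigma> \<circ> \<tau> \<in> S)"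

end

theory Submission
  imports Defs
begin

text \<open>The value of a generalized cellular automaton \<tau> at the identity depends exactly on the
  cells of its essential set, the cells p for which changing x p can change \<tau> x 0. The essential
  set lies in every memory set and is itself a memory set, so it is the minimal memory set.
  If K is fully invariant, composing automata with memory sets S and T inside K yields the memory
  set \<phi>(S) + T, again inside K. Conversely, for k \<in> K and an endomorphism \<phi>, composing
  the translation x \<mapsto> (h \<mapsto> x (h + k)) (memory set {k}) with x \<mapsto> x \<circ> \<phi>
  (memory set {0}) gives x \<mapsto> (h \<mapsto> x (\<phi> (h + k))), whose essential set contains \<phi> k
  as soon as A has two elements.\<close>

lemma group_endo_zero: "group_endo \<phi> \<Longrightarrow> \<phi> 0 = (0::'g::group_add)"
  unfolding group_endo_def by (metis add.right_neutral add_left_cancel)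

lemma group_endo_minus: "group_endo \<phi> \<Longrightarrow> \<phi> (- a) = - \<phi> (a::'g::group_add)"
  unfolding group_endo_def
  by (metis add.right_neutral add_left_cancel eq_neg_iff_add_eq_0)

lemma group_endo_id: "group_endo id"
  unfolding group_endo_def by simp

lemma group_endo_comp: "group_endo \<phi> \<Longrightarrow> group_endo \<psi> \<Longrightarrow> group_endo (\<phi> \<circ> \<psi>)"
  unfolding group_endo_def by simp

lemma phi_memory_set_at_zero:
  assumes "phi_memory_set \<phi> T \<tau>" "group_endo \<phi>"
  obtains \<mu> where "\<And>x. \<tau> x 0 = \<mu> (restr x T)"
proof -
  obtain \<mu> where "\<And>x h. \<tau> x h = \<mu> (restr (shift (\<phi> (- h)) x) T)"
    using assms(1) unfolding phi_memory_set_def by blast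
  then show thesis
    by (intro that[of \<mu>]) (simp add: group_endo_zero[OF assms(2)] shift_def)
qed

lemma phi_memory_set_shift_to_zero:
  assumes "phi_memory_set \<phi> T \<tau>" "group_endo \<phi>"
  shows "\<tau> x h = \<tau> (shift (\<phi> (- h)) x) 0"
proof -
  obtain \<mu> where "\<And>x h. \<tau> x h = \<mu> (restr (shift (\<phi> (- h)) x) T)"
    using assms(1) unfolding phi_memory_set_def by blast
  then show ?thesis
    by (simp add: group_endo_zero[OF assms(2)] shift_def)
qed

definition essential_set :: "(('g::group_add \<Rightarrow> 'a) \<Rightarrow> ('g \<Rightarrow> 'a)) \<Rightarrow> 'g set" where
  "essential_set \<tau> = {p. \<exists>x a. \<tau> (x(p := a)) 0 \<noteq> \<tau> x 0}"

lemma essential_set_subset_phi_memory_set: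
  assumes "phi_memory_set \<phi> T \<tau>" "group_endo \<phi>"
  shows "essential_set \<tau> \<subseteq> T"
proof
  fix p assume "p \<in> essential_set \<tau>"
  then obtain x a where changed: "\<tau> (x(p := a)) 0 \<noteq> \<tau> x 0"
    unfolding essential_set_def by blast
  obtain \<mu> where \<mu>: "\<And>x. \<tau> x 0 = \<mu> (restr x T)"
    using phi_memory_set_at_zero[OF assms] by blast
  show "p \<in> T"
  proof (rule ccontr)
    assume "p \<notin> T"
    then have "restr (x(p := a)) T = restr x T"
      unfolding restr_def by auto
    then show False
      using changed by (simp add: \<mu>)
  qed
qed

lemma essential_set_subset_minimal_memory_set: "essential_set \<tau> \<subseteq> minimal_memory_set \<tau>"
  unfolding minimal_memory_set_def memory_set_def
  using essential_set_subset_phi_memory_set by blast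

lemma minimal_memory_set_subset_phi_memory_set:
  "phi_memory_set \<phi> T \<tau> \<Longrightarrow> group_endo \<phi> \<Longrightarrow> minimal_memory_set \<tau> \<subseteq> T"
  unfolding minimal_memory_set_def memory_set_def by blast

lemma eq_at_zero_if_differ_off_essential_set:
  assumes "finite D" "\<And>p. p \<notin> D \<Longrightarrow> x p = y p" "D \<inter> essential_set \<tau> = {}"
  shows "\<tau> x 0 = \<tau> y 0"
  using assms
proof (induction D arbitrary: x rule: finite_induct)
  case empty
  then have "x = y" by auto
  then show ?case by simp
next
  case (insert p D)
  have "\<tau> (x(p := y p)) 0 = \<tau> y 0"
    by (rule insert.IH) (use insert.prems in auto)
  moreover have "p \<notin> essential_set \<tau>"
    using insert.prems(2) by blast
  then have "\<tau> (x(p := y p)) 0 = \<tau> x 0"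
    unfolding essential_set_def by blast
  ultimately show ?case by simp
qed

lemma eq_at_zero_if_agree_on_essential_set:
  assumes "phi_memory_set \<phi> T \<tau>" "group_endo \<phi>"
    and agree: "\<And>p. p \<in> essential_set \<tau> \<Longrightarrow> x p = y p"
  shows "\<tau> x 0 = \<tau> y 0"
proof -
  obtain \<mu> where \<mu>: "\<And>x. \<tau> x 0 = \<mu> (restr x T)"
    using phi_memory_set_at_zero[OF assms(1,2)] by blast
  define z where "z = (\<lambda>p. if p \<in> T then y p else x p)"
  have "restr z T = restr y T"
    unfolding restr_def z_def by auto
  then have "\<tau> z 0 = \<tau> y 0"
    by (simp add: \<mu>)
  moreover have "finite (T - essential_set \<tau>)"
    using assms(1) unfolding phi_memory_set_def by blast
  then have "\<tau> x 0 = \<tau> z 0"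
    by (rule eq_at_zero_if_differ_off_essential_set[of "T - essential_set \<tau>"])
      (use agree in \<open>auto simp: z_def\<close>)
  ultimately show ?thesis by simp
qed

lemma phi_memory_set_essential_set:
  assumes "phi_memory_set \<phi> T \<tau>" "group_endo \<phi>"
  shows "phi_memory_set \<phi> (essential_set \<tau>) \<tau>"
proof -
  have "finite T"
    using assms(1) unfolding phi_memory_set_def by blast
  then have "finite (essential_set \<tau>)"
    using essential_set_subset_phi_memory_set[OF assms] by (rule finite_subset[rotated])
  moreover have "\<tau> x h = \<tau> (restr (shift (\<phi> (- h)) x) (essential_set \<tau>)) 0" for x h
  proof -
    have "\<tau> x h = \<tau> (shift (\<phi> (- h)) x) 0"
      by (rule phi_memory_set_shift_to_zero[OF assms])
    also have "\<dots> = \<tau> (restr (shift (\<phi> (- h)) x) (essential_set \<tau>)) 0"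
      by (rule eq_at_zero_if_agree_on_essential_set[OF assms]) (simp add: restr_def)
    finally show ?thesis .
  qed
  ultimately show ?thesis
    unfolding phi_memory_set_def by (intro conjI exI[of _ "\<lambda>w. \<tau> w 0"] allI)
qed

lemma phi_memory_set_comp:
  assumes S: "phi_memory_set \<psi> S \<sigma>" and "group_endo \<psi>"
    and T: "phi_memory_set \<phi> T \<tau>" and \<phi>: "group_endo \<phi>"
  shows "phi_memory_set (\<phi> \<circ> \<psi>) {\<phi> s + t |s t. s \<in> S \<and> t \<in> T} (\<sigma> \<circ> \<tau>)"
proof -
  obtain \<mu>\<sigma> where \<mu>\<sigma>: "\<And>x h. \<sigma> x h = \<mu>\<sigma> (restr (shift (\<psi> (- h)) x) S)"
    using S unfolding phi_memory_set_def by blast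
  obtain \<mu>\<tau> where \<mu>\<tau>: "\<And>x h. \<tau> x h = \<mu>\<tau> (restr (shift (\<phi> (- h)) x) T)"
    using T unfolding phi_memory_set_def by blast
  define U where "U = {\<phi> s + t |s t. s \<in> S \<and> t \<in> T}"
  have "U = (\<lambda>(s, t). \<phi> s + t) ` (S \<times> T)"
    unfolding U_def by auto
  then have "finite U"
    using S T unfolding phi_memory_set_def by simp
  define \<mu> where "\<mu> = (\<lambda>w. \<mu>\<sigma> (\<lambda>s. if s \<in> S
     then \<mu>\<tau> (\<lambda>t. if t \<in> T then w (\<phi> s + t) else undefined) else undefined))"
  have "(\<sigma> \<circ> \<tau>) x h = \<mu> (restr (shift ((\<phi> \<circ> \<psi>) (- h)) x) U)" for x h
  proof -
    define w where "w = restr (shift ((\<phi> \<circ> \<psi>) (- h)) x) U"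
    have "\<tau> x (- \<psi> (- h) + s) = \<mu>\<tau> (\<lambda>t. if t \<in> T then w (\<phi> s + t) else undefined)"
      if "s \<in> S" for s
    proof -
      have "- \<phi> (- (- \<psi> (- h) + s)) = - \<phi> (\<psi> (- h)) + \<phi> s"
        using group_endo_minus[OF \<phi>] \<phi> unfolding group_endo_def by simp
      then have "restr (shift (\<phi> (- (- \<psi> (- h) + s))) x) T
          = (\<lambda>t. if t \<in> T then w (\<phi> s + t) else undefined)"
        using that unfolding w_def restr_def shift_def U_def by (auto simp: add.assoc)
      then show ?thesis by (simp add: \<mu>\<tau>)
    qed
    then have "restr (shift (\<psi> (- h)) (\<tau> x)) S = (\<lambda>s. if s \<in> S
        then \<mu>\<tau> (\<lambda>t. if t \<in> T then w (\<phi> s + t) else undefined) else undefined)"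
      by (auto simp: restr_def shift_def)
    then have "(\<sigma> \<circ> \<tau>) x h = \<mu> w"
      by (simp add: \<mu>\<sigma> \<mu>_def)
    then show ?thesis
      unfolding w_def .
  qed
  with \<open>finite U\<close> show ?thesis
    unfolding phi_memory_set_def U_def by blast
qed

lemma GCA_KI:
  "group_endo \<phi> \<Longrightarrow> phi_memory_set \<phi> T \<tau> \<Longrightarrow> T \<subseteq> K \<Longrightarrow> \<tau> \<in> GCA_K K"
  unfolding GCA_K_def GCA_def is_phi_CA_def
  using minimal_memory_set_subset_phi_memory_set by blast

lemma GCA_KE:
  assumes "\<tau> \<in> GCA_K K"
  obtains \<phi> where "group_endo \<phi>" "phi_memory_set \<phi> (essential_set \<tau>) \<tau>"
    "essential_set \<tau> \<subseteq> K"
  using assms phi_memory_set_essential_set essential_set_subset_minimal_memory_set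
  unfolding GCA_K_def GCA_def is_phi_CA_def by blast

lemma id_in_GCA_K:
  assumes "0 \<in> K"
  shows "id \<in> GCA_K K"
proof (rule GCA_KI[OF group_endo_id])
  show "phi_memory_set id {0} id"
    unfolding phi_memory_set_def
    by (intro conjI exI[of _ "\<lambda>w. w 0"]) (auto simp: restr_def shift_def)
qed (use assms in simp)

lemma GCA_K_comp_closed:
  assumes "fully_invariant K" "is_subgroup K"
    and "\<sigma> \<in> GCA_K K" "\<tau> \<in> GCA_K K"
  shows "\<sigma> \<circ> \<tau> \<in> GCA_K K"
proof -
  obtain \<psi> where \<psi>: "group_endo \<psi>" "phi_memory_set \<psi> (essential_set \<sigma>) \<sigma>"
    and S: "essential_set \<sigma> \<subseteq> K"
    using assms(3) by (rule GCA_KE)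
  obtain \<phi> where \<phi>: "group_endo \<phi>" "phi_memory_set \<phi> (essential_set \<tau>) \<tau>"
    and T: "essential_set \<tau> \<subseteq> K"
    using assms(4) by (rule GCA_KE)
  have "\<phi> s \<in> K" if "s \<in> K" for s
    using assms(1) \<phi>(1) that unfolding fully_invariant_def by blast
  then have "{\<phi> s + t |s t. s \<in> essential_set \<sigma> \<and> t \<in> essential_set \<tau>} \<subseteq> K"
    using S T assms(2) unfolding is_subgroup_def by blast
  then show ?thesis
    using GCA_KI group_endo_comp[OF \<phi>(1) \<psi>(1)] phi_memory_set_comp[OF \<psi>(2,1) \<phi>(2,1)]
    by blast
qed

lemma fully_invariant_if_GCA_K_comp_closed:
  assumes "a \<noteq> (b :: 'a)" and "0 \<in> K"
    and closed: "\<And>\<sigma> \<tau>. \<sigma> \<in> GCA_K K \<Longrightarrow> \<tau> \<in> GCA_K K \<Longrightarrow>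
      \<sigma> \<circ> \<tau> \<in> (GCA_K K :: (('g::group_add \<Rightarrow> 'a) \<Rightarrow> ('g \<Rightarrow> 'a)) set)"
  shows "fully_invariant K"
  unfolding fully_invariant_def
proof (intro allI impI image_subsetI)
  fix \<phi> :: "'g \<Rightarrow> 'g" and k assume \<phi>: "group_endo \<phi>" and "k \<in> K"
  define \<sigma> :: "('g \<Rightarrow> 'a) \<Rightarrow> ('g \<Rightarrow> 'a)" where "\<sigma> = (\<lambda>x h. x (h + k))"
  define \<tau> :: "('g \<Rightarrow> 'a) \<Rightarrow> ('g \<Rightarrow> 'a)" where "\<tau> = (\<lambda>x h. x (\<phi> h))"
  have "phi_memory_set id {k} \<sigma>"
    unfolding phi_memory_set_def
    by (intro conjI exI[of _ "\<lambda>w. w k"]) (auto simp: \<sigma>_def restr_def shift_def)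
  then have "\<sigma> \<in> GCA_K K"
    using GCA_KI group_endo_id \<open>k \<in> K\<close> by blast
  moreover have "phi_memory_set \<phi> {0} \<tau>"
    unfolding phi_memory_set_def
    by (intro conjI exI[of _ "\<lambda>w. w 0"])
      (auto simp: \<tau>_def restr_def shift_def group_endo_minus[OF \<phi>])
  then have "\<tau> \<in> GCA_K K"
    using GCA_KI \<phi> \<open>0 \<in> K\<close> by blast
  ultimately have "minimal_memory_set (\<sigma> \<circ> \<tau>) \<subseteq> K"
    using closed unfolding GCA_K_def by blast
  moreover have "\<phi> k \<in> essential_set (\<sigma> \<circ> \<tau>)"
    unfolding essential_set_def
    using assms(1) by (intro CollectI exI[of _ "\<lambda>_. a"] exI[of _ b]) (simp add: \<sigma>_def \<tau>_def)
  ultimately show "\<phi> k \<in> K"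
    using essential_set_subset_minimal_memory_set by blast
qed

theorem proposition2p8:
  fixes K :: "'g::group_add set"
  assumes "card (UNIV :: 'a::finite set) \<ge> 2"
    and "is_subgroup K"
  shows "is_submonoid_GCA (GCA_K K :: (('g \<Rightarrow> 'a) \<Rightarrow> ('g \<Rightarrow> 'a)) set) \<longleftrightarrow> fully_invariant K"
proof -
  obtain a b :: 'a where "a \<noteq> b"
    using assms(1) card_le_Suc0_iff_eq[of "UNIV :: 'a set"] by fastforce
  have "0 \<in> K"
    using assms(2) unfolding is_subgroup_def by blast
  have "GCA_K K \<subseteq> GCA"
    unfolding GCA_K_def by blast
  with \<open>0 \<in> K\<close> show ?thesis
    unfolding is_submonoid_GCA_def
    using id_in_GCA_K GCA_K_comp_closed[OF _ assms(2)]
      fully_invariant_if_GCA_K_comp_closed[OF \<open>a \<noteq> b\<close> \<open>0 \<in> K\<close>]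
    by blast
qed

end
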